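(* Let $\alpha\in(0,\infty)$, $\beta\in(0,1]$, and let $Y$ be a non-negative random variable with $\mathbb{E}Y^2<\infty$ and $\mathrm{Var}\,Y\leq\mathbb{E}Y=:\mu$. Then $$\mathbb{E}\frac{1}{(\alpha+Y)^\beta}\leq\frac{\widetilde C(\alpha,\beta)}{(\alpha+\mu)^\beta},$$ where $\widetilde C(\alpha,\beta)=\sup_{x\in[0,\infty)}h(x)$ with $h(x)=\frac{(\alpha+x)^\beta}{1+x}\big(\frac{x}{(\alpha+1+x)^\beta}+\frac{1}{\alpha^\beta}\big)$. Moreover, for fixed $\alpha$ and $\beta$ the factor $\widetilde C(\alpha,\beta)$ cannot be replaced by a smaller constant (in the sense that the inequality with a smaller constant fails for some such $Y$). *)

theory Defs
  imports "HOL-Probability.Probability"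
begin

definition h_fun :: "real \<Rightarrow> real \<Rightarrow> real \<Rightarrow> real" where
  "h_fun \<alpha> \<beta> x = (\<alpha> + x) powr \<beta> / (1 + x) *
      (x / (\<alpha> + 1 + x) powr \<beta> + 1 / \<alpha> powr \<beta>)"

definition C_tilde :: "real \<Rightarrow> real \<Rightarrow> real" where
  "C_tilde \<alpha> \<beta> = (SUP x\<in>{0..}. h_fun \<alpha> \<beta> x)"

end

theory Submission
  imports Defs
begin

(* For f(y) = (alpha + y) powr -beta the second derivative f'' is positive and strictly
   decreasing.  Hence on [0, inf) f lies below the quadratic q that agrees with f at 0 and touches it at
   t = 1 + mu, and the leading coefficient of q is nonnegative.  E q(Y) depends only on E Y = mu
   and E Y^2 = Var Y + mu^2 <= mu + mu^2, and increases with the latter; at the maximal value it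
   equals E q(Z) = E f(Z) for the law Z on {0, 1 + mu} with mean and variance mu, because q = f
   on the support of Z.  Thus E f(Y) <= E f(Z) = h(mu) / (alpha + mu) powr beta, and since the
   laws Z attain this value for every mu, the supremum of h cannot be lowered. *)

lemma MVT_sgn:
  fixes f f' :: "real \<Rightarrow> real"
  assumes "a < b" and "\<And>x. a \<le> x \<Longrightarrow> x \<le> b \<Longrightarrow> (f has_real_derivative f' x) (at x)"
  obtains z where "a < z" "z < b" "sgn (f' z) = sgn (f b - f a)"
proof -
  obtain z where z: "a < z" "z < b" "f b - f a = (b - a) * f' z"
    using MVT2[of a b f f'] assms by blast
  then have "sgn (f' z) = sgn (f b - f a)"
    by (simp add: sgn_mult)
  with z that show thesis by blast
qed

lemma nonneg_if_deriv2_strict_mono: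
  fixes g g' g'' :: "real \<Rightarrow> real"
  assumes g': "\<And>x. a \<le> x \<Longrightarrow> (g has_real_derivative g' x) (at x)"
    and g'': "\<And>x. a \<le> x \<Longrightarrow> (g' has_real_derivative g'' x) (at x)"
    and mono: "strict_mono_on {a..} g''"
    and "a < t" and "g a = 0" and "g t = 0" and "g' t = 0" and "a \<le> y"
  shows "0 \<le> g y"
proof (rule ccontr)
  assume neg: "\<not> 0 \<le> g y"
  have sgn_g: "\<exists>z. u < z \<and> z < v \<and> sgn (g' z) = sgn (g v - g u)" if "a \<le> u" "u < v" for u v
    by (rule MVT_sgn[of u v g g']) (use that g' in auto)
  have sgn_g': "\<exists>z. u < z \<and> z < v \<and> sgn (g'' z) = sgn (g' v - g' u)" if "a \<le> u" "u < v" for u v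
    by (rule MVT_sgn[of u v g' g'']) (use that g'' in auto)
  have g''_less: "g'' u < g'' v" if "a \<le> u" "u < v" for u v
    using strict_mono_onD[OF mono] that by simp
  consider "t < y" | "a < y" "y < t"
    using neg assms by fastforce
  then show False
  proof cases
    case 1
    obtain z1 where z1: "a < z1" "z1 < t" "g' z1 = 0"
      using sgn_g[of a t] assms by (auto simp: sgn_eq_0_iff)
    obtain z2 where z2: "z1 < z2" "z2 < t" "g'' z2 = 0"
      using sgn_g'[of z1 t] z1 assms by (auto simp: sgn_eq_0_iff)
    obtain z3 where z3: "t < z3" "z3 < y" "g' z3 < 0"
      using sgn_g[of t y] 1 neg assms by (auto simp: sgn_if split: if_splits)
    obtain z4 where z4: "t < z4" "z4 < z3" "g'' z4 < 0"
      using sgn_g'[of t z3] z3 assms by (auto simp: sgn_if split: if_splits)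
    show False using g''_less[of z2 z4] z1 z2 z4 by simp
  next
    case 2
    obtain z1 where z1: "a < z1" "z1 < y" "g' z1 < 0"
      using sgn_g[of a y] 2 neg assms by (auto simp: sgn_if split: if_splits)
    obtain z2 where z2: "y < z2" "z2 < t" "0 < g' z2"
      using sgn_g[of y t] 2 neg assms by (auto simp: sgn_if split: if_splits)
    obtain z3 where z3: "z1 < z3" "z3 < z2" "0 < g'' z3"
      using sgn_g'[of z1 z2] z1 z2 by (auto simp: sgn_if split: if_splits)
    obtain z4 where z4: "z2 < z4" "z4 < t" "g'' z4 < 0"
      using sgn_g'[of z2 t] z1 z2 assms by (auto simp: sgn_if split: if_splits)
    show False using g''_less[of z3 z4] z1 z3 z4 by simp
  qed
qed

lemma le_tangent_secant_quadratic:
  fixes f f' f'' :: "real \<Rightarrow> real"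
  assumes f': "\<And>x. a \<le> x \<Longrightarrow> (f has_real_derivative f' x) (at x)"
    and f'': "\<And>x. a \<le> x \<Longrightarrow> (f' has_real_derivative f'' x) (at x)"
    and anti: "strict_antimono_on {a..} f''"
    and "a < t" and "a \<le> y"
  shows "f y \<le> f t + f' t * (y - t) + (f a - f t + f' t * (t - a)) / (t - a)^2 * (y - t)^2"
proof -
  define c where "c = (f a - f t + f' t * (t - a)) / (t - a)^2"
  define g where "g y = f t + f' t * (y - t) + c * (y - t)^2 - f y" for y
  define g' where "g' y = f' t + 2 * c * (y - t) - f' y" for y
  define g'' where "g'' y = 2 * c - f'' y" for y
  have "0 \<le> g y"
  proof (rule nonneg_if_deriv2_strict_mono[where g = g and g' = g' and g'' = g'' and a = a and t = t])
    show "(g has_real_derivative g' x) (at x)" if "a \<le> x" for x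
    proof -
      have "((\<lambda>y. f t + f' t * (y - t) + c * (y - t)^2) has_real_derivative f' t + 2 * c * (x - t)) (at x)"
        by (auto intro!: derivative_eq_intros)
      from DERIV_diff[OF this f'[OF that]] show ?thesis
        unfolding g_def g'_def by simp
    qed
    show "(g' has_real_derivative g'' x) (at x)" if "a \<le> x" for x
    proof -
      have "((\<lambda>y. f' t + 2 * c * (y - t)) has_real_derivative 2 * c) (at x)"
        by (auto intro!: derivative_eq_intros)
      from DERIV_diff[OF this f''[OF that]] show ?thesis
        unfolding g'_def g''_def by simp
    qed
    show "strict_mono_on {a..} g''"
      using anti unfolding g''_def by (auto simp: monotone_on_def)
    have "c * (a - t)^2 = f a - f t + f' t * (t - a)"
      using \<open>a < t\<close> by (simp add: c_def power2_commute)
    then show "g a = 0"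
      by (simp add: g_def algebra_simps)
  qed (use assms in \<open>simp_all add: g_def g'_def\<close>)
  then show ?thesis
    unfolding g_def c_def by linarith
qed

definition two_point_pmf :: "real \<Rightarrow> real pmf" where
  "two_point_pmf \<mu> = map_pmf (\<lambda>b. if b then 1 + \<mu> else 0) (bernoulli_pmf (\<mu> / (1 + \<mu>)))"

lemma expectation_two_point_pmf:
  assumes "0 \<le> \<mu>"
  shows "measure_pmf.expectation (two_point_pmf \<mu>) g = (g 0 + \<mu> * g (1 + \<mu>)) / (1 + \<mu>)"
proof -
  have "measure_pmf.expectation (two_point_pmf \<mu>) g
      = g (1 + \<mu>) * (\<mu> / (1 + \<mu>)) + g 0 * (1 - \<mu> / (1 + \<mu>))"
    using assms by (simp add: two_point_pmf_def)
  also have "\<dots> = (g 0 + \<mu> * g (1 + \<mu>)) / (1 + \<mu>)"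
    using assms by (simp add: field_simps add_nonneg_eq_0_iff)
  finally show ?thesis .
qed

lemma (in prob_space) expectation_square_deviation:
  fixes Y :: "'a \<Rightarrow> real"
  assumes "integrable M Y" and "integrable M (\<lambda>\<omega>. (Y \<omega>)^2)"
  shows "expectation (\<lambda>\<omega>. (Y \<omega> - t)^2) = variance Y + (t - expectation Y)^2"
  using assms by (simp add: variance_eq power2_diff prob_space field_simps power2_eq_square)

lemma (in prob_space) expectation_le_two_point_pmf:
  fixes f f' f'' :: "real \<Rightarrow> real" and Y :: "'a \<Rightarrow> real"
  assumes f': "\<And>x. 0 \<le> x \<Longrightarrow> (f has_real_derivative f' x) (at x)"
    and f'': "\<And>x. 0 \<le> x \<Longrightarrow> (f' has_real_derivative f'' x) (at x)"
    and anti: "strict_antimono_on {0..} f''"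
    and convex: "\<And>x. 0 \<le> x \<Longrightarrow> 0 \<le> f'' x"
    and Y_meas: "random_variable borel Y"
    and Y_nonneg: "\<And>\<omega>. \<omega> \<in> space M \<Longrightarrow> 0 \<le> Y \<omega>"
    and Y_sq: "integrable M (\<lambda>\<omega>. (Y \<omega>)^2)"
    and var: "variance Y \<le> expectation Y"
    and f_int: "integrable M (\<lambda>\<omega>. f (Y \<omega>))"
  shows "expectation (\<lambda>\<omega>. f (Y \<omega>)) \<le> measure_pmf.expectation (two_point_pmf (expectation Y)) f"
proof -
  define \<mu> where "\<mu> = expectation Y"
  define t where "t = 1 + \<mu>"
  define c where "c = (f 0 - f t + f' t * t) / t^2"
  have Y_int: "integrable M Y"
    using square_integrable_imp_integrable[OF Y_meas Y_sq] .
  have "0 \<le> \<mu>"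
    unfolding \<mu>_def using Y_nonneg by (simp add: integral_nonneg)
  then have "0 < t"
    by (simp add: t_def)
  have "0 \<le> c"
  proof -
    have "convex_on {0..} f"
      using f' f'' convex by (intro f''_ge0_imp_convex[where f' = f' and f'' = f'']) auto
    then have "f' t * (0 - t) \<le> f 0 - f t"
      by (rule convex_on_imp_above_tangent) (use \<open>0 < t\<close> f'[of t] in \<open>auto intro: has_field_derivative_at_within\<close>)
    then show ?thesis
      by (simp add: c_def)
  qed
  have majorant: "f (Y \<omega>) \<le> f t + f' t * (Y \<omega> - t) + c * (Y \<omega> - t)^2" if "\<omega> \<in> space M" for \<omega>
    using le_tangent_secant_quadratic[OF f' f'' anti \<open>0 < t\<close> Y_nonneg[OF that]]
    by (simp add: c_def)
  have dev_int: "integrable M (\<lambda>\<omega>. (Y \<omega> - t)^2)"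
    using Y_int Y_sq by (simp add: power2_diff)
  have "expectation (\<lambda>\<omega>. (Y \<omega> - t)^2) = variance Y + (t - \<mu>)^2"
    using Y_int Y_sq unfolding \<mu>_def by (rule expectation_square_deviation)
  also have "\<dots> \<le> t"
    using var by (simp add: t_def \<mu>_def)
  finally have dev: "expectation (\<lambda>\<omega>. (Y \<omega> - t)^2) \<le> t" .
  have "expectation (\<lambda>\<omega>. f (Y \<omega>)) \<le> expectation (\<lambda>\<omega>. f t + f' t * (Y \<omega> - t) + c * (Y \<omega> - t)^2)"
    using f_int Y_int dev_int majorant by (intro integral_mono) auto
  also have "\<dots> = f t + f' t * (\<mu> - t) + c * expectation (\<lambda>\<omega>. (Y \<omega> - t)^2)"
    using Y_int dev_int by (simp add: prob_space \<mu>_def)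
  also have "\<dots> \<le> f t + f' t * (\<mu> - t) + c * t"
    using dev \<open>0 \<le> c\<close> by (simp add: mult_left_mono)
  also have "\<dots> = (f 0 + \<mu> * f t) / t"
  proof -
    have "c * t = (f 0 - f t) / t + f' t"
      using \<open>0 < t\<close> by (simp add: c_def power2_eq_square field_simps)
    moreover have "f t + (f 0 - f t) / t = (f 0 + \<mu> * f t) / t"
      using \<open>0 < t\<close> by (simp add: t_def field_simps)
    ultimately show ?thesis
      by (simp add: t_def)
  qed
  finally show ?thesis
    using \<open>0 \<le> \<mu>\<close> by (simp add: expectation_two_point_pmf \<mu>_def t_def)
qed

lemma h_fun_div_powr:
  assumes "0 < \<alpha>" and "0 \<le> x"
  shows "h_fun \<alpha> \<beta> x / (\<alpha> + x) powr \<beta> = (\<alpha> powr -\<beta> + x * (\<alpha> + (1 + x)) powr -\<beta>) / (1 + x)"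
  using assms by (simp add: h_fun_def powr_minus_divide add_ac)

lemma h_fun_le:
  assumes "0 < \<alpha>" and "0 < \<beta>" and "\<beta> \<le> 1" and "0 \<le> x"
  shows "h_fun \<alpha> \<beta> x \<le> 1 + (1 + \<alpha>) / \<alpha> powr \<beta>"
proof -
  have "(\<alpha> + x) powr \<beta> / (1 + x) * (x / (\<alpha> + 1 + x) powr \<beta>)
      = (\<alpha> + x) powr \<beta> / (\<alpha> + 1 + x) powr \<beta> * (x / (1 + x))"
    by simp
  also have "\<dots> \<le> 1 * 1"
    using assms by (intro mult_mono) (auto simp: divide_le_eq intro: powr_mono2)
  finally have first: "(\<alpha> + x) powr \<beta> / (1 + x) * (x / (\<alpha> + 1 + x) powr \<beta>) \<le> 1"
    by simp
  have "(\<alpha> + x) powr \<beta> \<le> max 1 (\<alpha> + x)"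
  proof (cases "1 \<le> \<alpha> + x")
    case True
    then have "(\<alpha> + x) powr \<beta> \<le> (\<alpha> + x) powr 1"
      using assms by (intro powr_mono) auto
    then show ?thesis
      using assms by simp
  next
    case False
    then have "(\<alpha> + x) powr \<beta> \<le> 1 powr \<beta>"
      using assms by (intro powr_mono2) auto
    then show ?thesis
      by simp
  qed
  also have "\<dots> \<le> (1 + \<alpha>) * (1 + x)"
    using assms by (simp add: algebra_simps)
  finally have "(\<alpha> + x) powr \<beta> / (1 + x) \<le> 1 + \<alpha>"
    using assms by (simp add: divide_le_eq)
  from divide_right_mono[OF this, of "\<alpha> powr \<beta>"]
  have second: "(\<alpha> + x) powr \<beta> / (1 + x) * (1 / \<alpha> powr \<beta>) \<le> (1 + \<alpha>) / \<alpha> powr \<beta>"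
    by simp
  show ?thesis
    unfolding h_fun_def using first second by (simp add: distrib_left)
qed

lemma bdd_above_h_fun:
  assumes "0 < \<alpha>" and "0 < \<beta>" and "\<beta> \<le> 1"
  shows "bdd_above (h_fun \<alpha> \<beta> ` {0..})"
  using h_fun_le[OF assms] by (intro bdd_aboveI2) auto

lemma h_fun_le_C_tilde:
  assumes "0 < \<alpha>" and "0 < \<beta>" and "\<beta> \<le> 1" and "0 \<le> x"
  shows "h_fun \<alpha> \<beta> x \<le> C_tilde \<alpha> \<beta>"
  unfolding C_tilde_def using assms by (intro cSUP_upper bdd_above_h_fun) auto

lemma (in prob_space) expectation_inverse_powr_le_h_fun:
  fixes Y :: "'a \<Rightarrow> real"
  assumes "0 < \<alpha>" and "0 < \<beta>"
    and Y_meas: "random_variable borel Y"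
    and Y_nonneg: "\<And>\<omega>. \<omega> \<in> space M \<Longrightarrow> 0 \<le> Y \<omega>"
    and "integrable M (\<lambda>\<omega>. (Y \<omega>)^2)"
    and "variance Y \<le> expectation Y"
  shows "expectation (\<lambda>\<omega>. 1 / (\<alpha> + Y \<omega>) powr \<beta>)
           \<le> h_fun \<alpha> \<beta> (expectation Y) / (\<alpha> + expectation Y) powr \<beta>"
proof -
  define f where "f y = (\<alpha> + y) powr -\<beta>" for y
  define f' where "f' y = -\<beta> * (\<alpha> + y) powr (-\<beta> - 1)" for y
  define f'' where "f'' y = \<beta> * (\<beta> + 1) * (\<alpha> + y) powr (-\<beta> - 2)" for y
  have f': "(f has_real_derivative f' x) (at x)" if "0 \<le> x" for x
    unfolding f_def f'_def using that \<open>0 < \<alpha>\<close>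
    by (auto intro!: derivative_eq_intros simp: algebra_simps)
  have f'': "(f' has_real_derivative f'' x) (at x)" if "0 \<le> x" for x
    unfolding f'_def f''_def using that \<open>0 < \<alpha>\<close>
    by (auto intro!: derivative_eq_intros simp: algebra_simps)
  have "strict_antimono_on {0..} f''"
  proof (rule monotone_onI)
    fix u v :: real
    assume "u \<in> {0..}" "v \<in> {0..}" "u < v"
    then have "(\<alpha> + v) powr (-\<beta> - 2) < (\<alpha> + u) powr (-\<beta> - 2)"
      using assms by (intro powr_less_mono2_neg) auto
    then show "f'' v < f'' u"
      unfolding f''_def using \<open>0 < \<beta>\<close> by simp
  qed
  moreover have "0 \<le> f'' x" for x
    unfolding f''_def using \<open>0 < \<beta>\<close> by simp
  moreover have "integrable M (\<lambda>\<omega>. f (Y \<omega>))"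
  proof (rule integrable_const_bound[where B = "\<alpha> powr -\<beta>"])
    show "AE \<omega> in M. norm (f (Y \<omega>)) \<le> \<alpha> powr -\<beta>"
      unfolding f_def using Y_nonneg assms by (intro AE_I2) (auto intro: powr_mono2')
    show "(\<lambda>\<omega>. f (Y \<omega>)) \<in> borel_measurable M"
      unfolding f_def using Y_meas by measurable
  qed
  ultimately have "expectation (\<lambda>\<omega>. f (Y \<omega>))
      \<le> measure_pmf.expectation (two_point_pmf (expectation Y)) f"
    by (intro expectation_le_two_point_pmf[OF f' f''] assms) auto
  also have "\<dots> = h_fun \<alpha> \<beta> (expectation Y) / (\<alpha> + expectation Y) powr \<beta>"
    using \<open>0 < \<alpha>\<close> Y_nonneg by (simp add: expectation_two_point_pmf h_fun_div_powr f_def integral_nonneg)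
  finally show ?thesis
    by (simp add: f_def powr_minus_divide)
qed

lemma (in prob_space) expectation_inverse_powr_le_C_tilde:
  fixes Y :: "'a \<Rightarrow> real"
  assumes "0 < \<alpha>" and "0 < \<beta>" and "\<beta> \<le> 1"
    and "random_variable borel Y"
    and "\<forall>\<omega>\<in>space M. 0 \<le> Y \<omega>"
    and "integrable M (\<lambda>\<omega>. (Y \<omega>)^2)"
    and "variance Y \<le> expectation Y"
  shows "expectation (\<lambda>\<omega>. 1 / (\<alpha> + Y \<omega>) powr \<beta>)
           \<le> C_tilde \<alpha> \<beta> / (\<alpha> + expectation Y) powr \<beta>"
proof -
  have "expectation (\<lambda>\<omega>. 1 / (\<alpha> + Y \<omega>) powr \<beta>)
      \<le> h_fun \<alpha> \<beta> (expectation Y) / (\<alpha> + expectation Y) powr \<beta>"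
    using assms by (intro expectation_inverse_powr_le_h_fun) auto
  also have "\<dots> \<le> C_tilde \<alpha> \<beta> / (\<alpha> + expectation Y) powr \<beta>"
    using assms by (intro divide_right_mono h_fun_le_C_tilde) (auto simp: integral_nonneg)
  finally show ?thesis .
qed

lemma C_tilde_optimal:
  assumes "0 < \<alpha>" and "0 < \<beta>" and "\<beta> \<le> 1" and "c < C_tilde \<alpha> \<beta>"
  shows "\<exists>(M :: real measure) (Y :: real \<Rightarrow> real).
            prob_space M \<and> Y \<in> borel_measurable M \<and>
            (\<forall>\<omega>\<in>space M. Y \<omega> \<ge> 0) \<and>
            integrable M (\<lambda>\<omega>. (Y \<omega>)^2) \<and>
            prob_space.variance M Y \<le> prob_space.expectation M Y \<and>
            \<not> (prob_space.expectation M (\<lambda>\<omega>. 1 / (\<alpha> + Y \<omega>) powr \<beta>)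
                 \<le> c / (\<alpha> + prob_space.expectation M Y) powr \<beta>)"
proof -
  obtain x where "0 \<le> x" and "c < h_fun \<alpha> \<beta> x"
    using assms bdd_above_h_fun[of \<alpha> \<beta>] less_cSUP_iff[of "{0..}" "h_fun \<alpha> \<beta>" c]
    unfolding C_tilde_def by auto
  define M where "M = measure_pmf (two_point_pmf x)"
  interpret prob_space M
    unfolding M_def by (rule prob_space_measure_pmf)
  have EY: "expectation abs = x"
    using \<open>0 \<le> x\<close> by (simp add: M_def expectation_two_point_pmf)
  have "variance abs = (x\<^sup>2 + x) / (1 + x)"
    using \<open>0 \<le> x\<close> by (simp add: M_def EY expectation_two_point_pmf)
  also have "\<dots> = x"
    using \<open>0 \<le> x\<close> by (simp add: power2_eq_square field_simps add_nonneg_eq_0_iff)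
  finally have "variance abs = x" .
  moreover have "expectation (\<lambda>\<omega>. 1 / (\<alpha> + \<bar>\<omega>\<bar>) powr \<beta>) = h_fun \<alpha> \<beta> x / (\<alpha> + x) powr \<beta>"
    using \<open>0 \<le> x\<close> \<open>0 < \<alpha>\<close>
    by (simp add: M_def expectation_two_point_pmf h_fun_div_powr powr_minus_divide add_ac)
  moreover have "integrable M (\<lambda>\<omega>. \<omega>\<^sup>2)"
    unfolding M_def by (rule integrable_measure_pmf_finite) (simp add: two_point_pmf_def)
  moreover have "c / (\<alpha> + x) powr \<beta> < h_fun \<alpha> \<beta> x / (\<alpha> + x) powr \<beta>"
    using \<open>c < h_fun \<alpha> \<beta> x\<close> \<open>0 \<le> x\<close> \<open>0 < \<alpha>\<close> by (simp add: divide_strict_right_mono)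
  ultimately show ?thesis
    using EY prob_space_axioms by (intro exI[of _ M] exI[of _ abs]) (auto simp: M_def)
qed

theorem mainTheorem9:
  fixes \<alpha> \<beta> :: real
  assumes "\<alpha> > 0" and "0 < \<beta>" and "\<beta> \<le> 1"
  shows "(\<forall>(M :: 'a measure) (Y :: 'a \<Rightarrow> real).
            prob_space M \<longrightarrow> Y \<in> borel_measurable M \<longrightarrow>
            (\<forall>\<omega>\<in>space M. Y \<omega> \<ge> 0) \<longrightarrow>
            integrable M (\<lambda>\<omega>. (Y \<omega>)^2) \<longrightarrow>
            prob_space.variance M Y \<le> prob_space.expectation M Y \<longrightarrow>
            prob_space.expectation M (\<lambda>\<omega>. 1 / (\<alpha> + Y \<omega>) powr \<beta>)
              \<le> C_tilde \<alpha> \<beta> / (\<alpha> + prob_space.expectation M Y) powr \<beta>)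
       \<and> (\<forall>c < C_tilde \<alpha> \<beta>. \<exists>(M :: real measure) (Y :: real \<Rightarrow> real).
            prob_space M \<and> Y \<in> borel_measurable M \<and>
            (\<forall>\<omega>\<in>space M. Y \<omega> \<ge> 0) \<and>
            integrable M (\<lambda>\<omega>. (Y \<omega>)^2) \<and>
            prob_space.variance M Y \<le> prob_space.expectation M Y \<and>
            \<not> (prob_space.expectation M (\<lambda>\<omega>. 1 / (\<alpha> + Y \<omega>) powr \<beta>)
                 \<le> c / (\<alpha> + prob_space.expectation M Y) powr \<beta>))"
  using prob_space.expectation_inverse_powr_le_C_tilde[OF _ assms] C_tilde_optimal[OF assms]
  by blast

end
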